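(* For every non-negative integer $m$ and for indeterminates $x,y$ (equivalently, for all elements $x,y$ of any commutative ring), \[ (x+y)^{s(m)} \;=\; \sum_{\substack{0\leq k\leq m \\ (k,\,m-k)\ \text{carry-free}}} x^{s(k)}\,y^{s(m-k)} . \]
   Context: For a non-negative integer $k$, $s(k)$ denotes the sum of the digits of the binary representation of $k$ (e.g. $s(3)=2$, $s(0)=0$). A pair $(a,b)$ of non-negative integers is called carry-free if the addition $a+b$ performed in binary involves no carries, i.e. no binary digit position has a $1$ in both $a$ and $b$. *)

theory Defs
  imports Main
begin

fun bsum :: "nat \<Rightarrow> nat" where
  "bsum k = (if k = 0 then 0 else k mod 2 + bsum (k div 2))"

declare bsum.simps [simp del]

definition carry_free :: "nat \<Rightarrow> nat \<Rightarrow> bool" where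
  "carry_free a b \<longleftrightarrow> (\<forall>i. \<not> (bit a i \<and> bit b i))"

end

theory Submission
  imports Defs
begin

text \<open>A carry-free split of \<open>m\<close> is decided bit by bit: the lowest bit of \<open>m\<close>, if set, goes to
  exactly one of \<open>k\<close> and \<open>m - k\<close>, and the remaining bits form a carry-free split of \<open>m div 2\<close>.
  So the splits of \<open>2q\<close> are the doubled splits of \<open>q\<close>, and the splits of \<open>2q + 1\<close> are the
  doubled splits of \<open>q\<close> with the extra bit given either to \<open>m - k\<close> (a factor \<open>y\<close>) or to \<open>k\<close>
  (a factor \<open>x\<close>). Hence the sum satisfies the recursion of \<open>(x + y) ^ s(m)\<close>, namely
  \<open>s(2q) = s(q)\<close> and \<open>s(2q + 1) = s(q) + 1\<close>.\<close>

lemma bsum_0 [simp]: "bsum 0 = 0"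
  by (simp add: bsum.simps)

lemma bsum_double [simp]: "bsum (2 * n) = bsum n"
  by (cases "n = 0") (simp_all add: bsum.simps [of "2 * n"])

lemma bsum_Suc_double [simp]: "bsum (Suc (2 * n)) = Suc (bsum n)"
  by (simp add: bsum.simps)

lemma carry_free_iff_parity:
  "carry_free a b \<longleftrightarrow> \<not> (odd a \<and> odd b) \<and> carry_free (a div 2) (b div 2)"
proof -
  have split: "(\<forall>i. P i) \<longleftrightarrow> P 0 \<and> (\<forall>i. P (Suc i))" for P :: "nat \<Rightarrow> bool"
    by (metis not0_implies_Suc)
  show ?thesis
    unfolding carry_free_def split [of "\<lambda>i. \<not> (bit a i \<and> bit b i)"]
    by (simp add: bit_0 bit_Suc)
qed

lemma carry_free_0_left [simp]: "carry_free 0 b"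
  by (simp add: carry_free_def)

lemma carry_free_double_double [simp]: "carry_free (2 * a) (2 * b) \<longleftrightarrow> carry_free a b"
  by (subst carry_free_iff_parity) simp

lemma carry_free_double_Suc_double [simp]:
  "carry_free (2 * a) (Suc (2 * b)) \<longleftrightarrow> carry_free a b"
  by (subst carry_free_iff_parity) simp

lemma carry_free_Suc_double_double [simp]:
  "carry_free (Suc (2 * a)) (2 * b) \<longleftrightarrow> carry_free a b"
  by (subst carry_free_iff_parity) simp

lemma not_carry_free_Suc_double_Suc_double [simp]: "\<not> carry_free (Suc (2 * a)) (Suc (2 * b))"
  by (subst carry_free_iff_parity) simp

definition carry_free_splits :: "nat \<Rightarrow> nat set" where
  "carry_free_splits m = {k. k \<le> m \<and> carry_free k (m - k)}"

lemma finite_carry_free_splits: "finite (carry_free_splits m)"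
  by (rule finite_subset [of _ "{..m}"]) (auto simp: carry_free_splits_def)

lemma carry_free_splits_0: "carry_free_splits 0 = {0}"
  by (auto simp: carry_free_splits_def)

lemma double_mem_carry_free_splits_double:
  "2 * j \<in> carry_free_splits (2 * q) \<longleftrightarrow> j \<in> carry_free_splits q"
  by (auto simp: carry_free_splits_def simp flip: diff_mult_distrib2)

lemma Suc_double_notin_carry_free_splits_double:
  "Suc (2 * j) \<notin> carry_free_splits (2 * q)"
proof
  assume "Suc (2 * j) \<in> carry_free_splits (2 * q)"
  then have "Suc (2 * j) \<le> 2 * q" "carry_free (Suc (2 * j)) (2 * q - Suc (2 * j))"
    by (simp_all add: carry_free_splits_def)
  moreover from this(1) have "2 * q - Suc (2 * j) = Suc (2 * (q - j - 1))" by simp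
  ultimately show False by simp
qed

lemma double_mem_carry_free_splits_Suc_double:
  "2 * j \<in> carry_free_splits (Suc (2 * q)) \<longleftrightarrow> j \<in> carry_free_splits q"
proof -
  have "j \<le> q \<Longrightarrow> Suc (2 * q) - 2 * j = Suc (2 * (q - j))" by simp
  then show ?thesis by (auto simp: carry_free_splits_def)
qed

lemma Suc_double_mem_carry_free_splits_Suc_double:
  "Suc (2 * j) \<in> carry_free_splits (Suc (2 * q)) \<longleftrightarrow> j \<in> carry_free_splits q"
  by (auto simp: carry_free_splits_def simp flip: diff_mult_distrib2)

lemma nat_double_or_Suc_double: obtains j :: nat where "k = 2 * j" | j where "k = Suc (2 * j)"
  by (metis evenE oddE Suc_eq_plus1)

lemma Suc_double_neq_double: "Suc (2 * i) \<noteq> 2 * (j :: nat)"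
  by presburger

lemma carry_free_splits_double:
  "carry_free_splits (2 * q) = (*) 2 ` carry_free_splits q"
proof (rule set_eqI)
  fix k
  show "k \<in> carry_free_splits (2 * q) \<longleftrightarrow> k \<in> (*) 2 ` carry_free_splits q"
    by (cases k rule: nat_double_or_Suc_double)
      (auto simp: double_mem_carry_free_splits_double Suc_double_notin_carry_free_splits_double
        image_iff Suc_double_neq_double)
qed

lemma carry_free_splits_Suc_double:
  "carry_free_splits (Suc (2 * q))
     = (*) 2 ` carry_free_splits q \<union> (\<lambda>j. Suc (2 * j)) ` carry_free_splits q"
proof (rule set_eqI)
  fix k
  show "k \<in> carry_free_splits (Suc (2 * q))
      \<longleftrightarrow> k \<in> (*) 2 ` carry_free_splits q \<union> (\<lambda>j. Suc (2 * j)) ` carry_free_splits q"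
    by (cases k rule: nat_double_or_Suc_double)
      (auto simp: double_mem_carry_free_splits_Suc_double
        Suc_double_mem_carry_free_splits_Suc_double image_iff
        Suc_double_neq_double Suc_double_neq_double [symmetric])
qed

lemma power_bsum_eq_sum_carry_free_splits:
  fixes x y :: "'a :: comm_semiring_1"
  shows "(x + y) ^ bsum m = (\<Sum>k\<in>carry_free_splits m. x ^ bsum k * y ^ bsum (m - k))"
proof (induction m rule: nat_bit_induct)
  case zero
  show ?case by (simp add: carry_free_splits_0)
next
  case (even q)
  have "(\<Sum>k\<in>carry_free_splits (2 * q). x ^ bsum k * y ^ bsum (2 * q - k))
      = (\<Sum>j\<in>carry_free_splits q. x ^ bsum j * y ^ bsum (q - j))"
    by (simp add: carry_free_splits_double sum.reindex inj_on_def flip: diff_mult_distrib2)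
  with even.IH show ?case by simp
next
  case (odd q)
  let ?A = "carry_free_splits q" and ?t = "\<lambda>j. x ^ bsum j * y ^ bsum (q - j)"
  have disjoint: "(*) 2 ` ?A \<inter> (\<lambda>j. Suc (2 * j)) ` ?A = {}"
    by (auto simp: Suc_double_neq_double [symmetric])
  have diff_Suc_double: "Suc (2 * q) - 2 * j = Suc (2 * (q - j))" if "j \<in> ?A" for j
    using that by (auto simp: carry_free_splits_def)
  have "(\<Sum>k\<in>carry_free_splits (Suc (2 * q)). x ^ bsum k * y ^ bsum (Suc (2 * q) - k))
      = (\<Sum>j\<in>?A. x ^ bsum (2 * j) * y ^ bsum (Suc (2 * q) - 2 * j))
        + (\<Sum>j\<in>?A. x ^ bsum (Suc (2 * j)) * y ^ bsum (Suc (2 * q) - Suc (2 * j)))"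
    unfolding carry_free_splits_Suc_double
    by (simp add: sum.union_disjoint disjoint finite_carry_free_splits sum.reindex inj_on_def)
  also have "\<dots> = (\<Sum>j\<in>?A. y * ?t j) + (\<Sum>j\<in>?A. x * ?t j)"
    by (simp add: diff_Suc_double mult.assoc mult.left_commute flip: diff_mult_distrib2)
  also have "\<dots> = (x + y) * (x + y) ^ bsum q"
    by (simp add: odd.IH sum_distrib_left distrib_right sum.distrib add.commute)
  finally show ?case by simp
qed

theorem theorem2:
  fixes x y :: "'a :: comm_ring_1" and m :: nat
  shows "(x + y) ^ bsum m = (\<Sum>k \<in> {k. k \<le> m \<and> carry_free k (m - k)}. x ^ bsum k * y ^ bsum (m - k))"
  using power_bsum_eq_sum_carry_free_splits [of x y m] by (simp add: carry_free_splits_def)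

end
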